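(* Let $k$, $n$, $r$ be nonnegative integers and let $X$ be the set of labeled lattice sequences of type $(k,n,r)$. For $(\lambda,L)\in X$ with $\lambda$ of shape $\alpha$, assign the weight $\mathrm{wt}((\lambda,L))=\mathrm{sign}(\lambda) = (-1)^{|\alpha|-\ell(\alpha)}$. Then \[\sum_{(\lambda,L)\in X}\mathrm{wt}((\lambda,L))=\sum_{i=0}^k\binom{(r+1)i+n}{i}.\]
   Context: A composition $\alpha=(\alpha_1,\dots,\alpha_j)$ of $m\ge 0$ is a finite sequence of positive integers summing to $m$ (the empty composition $()$ is the composition of $0$); $|\alpha|$ is the sum of the parts, $\ell(\alpha)$ the number of parts. For $r\ge 0$, $c(m,r)$ is the set of compositions of $m$ with all parts in $\{2,\dots,r+1\}$, and $\mathcal{C}(k,r)=\bigcup_{m=0}^k c(m,r)$. A labeled tableau of shape $\alpha$ is a filling of the Young diagram of $\alpha$ (left-justified rows, row $i$ having $\alpha_i$ boxes) such that the first box of each row is empty and the remaining entries of each row are nonnegative integers strictly increasing from left to right; $\Lambda(\alpha,r)$ is the set of labeled tableaux of shape $\alpha$ all of whose entries are less than $r$. For $\lambda\in\Lambda(\alpha,r)$, $\mathrm{sign}(\lambda)=(-1)^{|\alpha|-\ell(\alpha)}$. A lattice sequence of width $m$ and height $h$ is a sequence of integers $(L_0,L_1,\dots,L_{m+1})$ with $0=L_0\le L_1\le\dots\le L_{m+1}=h$; $\mathcal{L}(m,h)$ denotes the set of these. A labeled lattice sequence of type $(k,n,r)$ is a pair $(\lambda,L)$ with $\lambda\in\Lambda(\alpha,r)$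 for some $\alpha\in\mathcal{C}(k,r)$ and $L\in\mathcal{L}(rk+n+1+\ell(\alpha),\,k-|\alpha|)$. *)

theory Defs
  imports Main
begin

definition comps_c :: "nat \<Rightarrow> nat \<Rightarrow> nat list set" where
  "comps_c m r = {\<alpha>. sum_list \<alpha> = m \<and> (\<forall>a\<in>set \<alpha>. 2 \<le> a \<and> a \<le> r + 1)}"

definition comps_C :: "nat \<Rightarrow> nat \<Rightarrow> nat list set" where
  "comps_C k r = (\<Union>m\<in>{0..k}. comps_c m r)"

text \<open>A filling of a Young diagram: a list of rows, each a list of boxes;
  an empty box is None, a labelled box is Some x.\<close>

definition shape :: "nat option list list \<Rightarrow> nat list" where
  "shape T = map length T"

definition Lambda :: "nat list \<Rightarrow> nat \<Rightarrow> nat option list list set" where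
  "Lambda \<alpha> r = {T. length T = length \<alpha> \<and>
     (\<forall>i<length \<alpha>. \<exists>xs. T ! i = None # map Some xs \<and> length xs + 1 = \<alpha> ! i \<and>
        sorted_wrt (<) xs \<and> (\<forall>x\<in>set xs. x < r))}"

definition sign :: "nat option list list \<Rightarrow> int" where
  "sign T = (-1) ^ (sum_list (shape T) - length (shape T))"

definition lattice_seqs :: "nat \<Rightarrow> int \<Rightarrow> int list set" where
  "lattice_seqs m h = {L. length L = m + 2 \<and> L ! 0 = 0 \<and> sorted L \<and> L ! (m + 1) = h}"

definition labeled_lattice_seqs :: "nat \<Rightarrow> nat \<Rightarrow> nat \<Rightarrow> (nat option list list \<times> int list) set" where
  "labeled_lattice_seqs k n r = {(T, L). \<exists>\<alpha>\<in>comps_C k r. T \<in> Lambda \<alpha> r \<and>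
      L \<in> lattice_seqs (r * k + n + 1 + length \<alpha>) (int k - int (sum_list \<alpha>))}"

definition wt :: "nat option list list \<times> int list \<Rightarrow> int" where
  "wt x = sign (fst x)"

end

theory Submission
  imports Defs "HOL-Library.Multiset" "HOL-Computational_Algebra.Formal_Power_Series"
begin

text \<open>
  Grouping the labeled lattice sequences by the shape alpha of the tableau turns the left-hand
  side into the sum over alpha in C(k,r) of w(alpha) C(M + l(alpha) + k - |alpha|, k - |alpha|),
  where M = rk + n + 1 and w(alpha) is the product of (-1)^(a-1) C(r, a-1) over the parts a:
  a row of length a can be labeled in C(r, a-1) ways, and there are C(m + h, h) lattice
  sequences of width m and height h. With A = 1/(1 - x) this is the coefficient of x^k in
  A^(M+1) Phi_k, where Phi_k is the sum of w(alpha) x^|alpha| A^l(alpha) over alpha in C(k,r).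
  Splitting off the first part of alpha shows that Phi_k inverts 1 - P modulo x^(k+1), where
  P = x ((1 - x)^r - 1) A collects the one-part compositions. Since 1 - P = (1 - x (1 - x)^r) A,
  modulo x^(k+1) we get A^(M+1) Phi_k = A^M (sum of x^i (1 - x)^(ri) over i <= k), that is,
  the sum of x^i A^(r(k-i)+n+1) over i <= k, whose coefficient of x^k is the right-hand side.
  In the formal text A, w, Phi_k and P are geometric_fps, comp_weight, comps_fps r k and
  parts_fps r.
\<close>

unbundle fps_syntax

section \<open>Counting tableaux and lattice sequences\<close>

lemma card_strict_sorted_lists:
  fixes A :: "'a::linorder set"
  assumes "finite A"
  shows "card {xs. length xs = j \<and> sorted_wrt (<) xs \<and> set xs \<subseteq> A} = card A choose j"
proof -
  have "bij_betw set {xs. length xs = j \<and> sorted_wrt (<) xs \<and> set xs \<subseteq> A}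
      {B. B \<subseteq> A \<and> card B = j}"
  proof (rule bij_betw_byWitness[where f' = sorted_list_of_set])
    show "\<forall>xs\<in>{xs. length xs = j \<and> sorted_wrt (<) xs \<and> set xs \<subseteq> A}. sorted_list_of_set (set xs) = xs"
      by (simp add: sorted_list_of_set.idem_if_sorted_distinct strict_sorted_iff)
    show "\<forall>B\<in>{B. B \<subseteq> A \<and> card B = j}. set (sorted_list_of_set B) = B"
      using finite_subset[OF _ assms] by auto
    show "set ` {xs. length xs = j \<and> sorted_wrt (<) xs \<and> set xs \<subseteq> A} \<subseteq> {B. B \<subseteq> A \<and> card B = j}"
      by (auto simp: strict_sorted_iff distinct_card)
    show "sorted_list_of_set ` {B. B \<subseteq> A \<and> card B = j} \<subseteq> {xs. length xs = j \<and> sorted_wrt (<) xs \<and> set xs \<subseteq> A}"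
      using finite_subset[OF _ assms] by auto
  qed
  then show ?thesis
    unfolding n_subsets[OF assms, symmetric] by (rule bij_betw_same_card)
qed

lemma card_sorted_lists:
  fixes A :: "'a::linorder set"
  assumes "finite A"
  shows "card {xs. length xs = m \<and> sorted xs \<and> set xs \<subseteq> A} = (card A + m - 1) choose m"
proof -
  have "bij_betw mset {xs. length xs = m \<and> sorted xs \<and> set xs \<subseteq> A} (multisets_of_size A m)"
  proof (rule bij_betw_byWitness[where f' = sorted_list_of_multiset])
    show "sorted_list_of_multiset ` multisets_of_size A m \<subseteq> {xs. length xs = m \<and> sorted xs \<and> set xs \<subseteq> A}"
      unfolding multisets_of_size_def
      by (auto simp flip: set_mset_mset, metis mset_sorted_list_of_multiset size_mset)
  qed (auto simp: multisets_of_size_def properties_for_sort)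
  then show ?thesis
    unfolding card_multisets_of_size[OF assms, symmetric] by (rule bij_betw_same_card)
qed

lemma card_list_all2: "card {xs. list_all2 P xs ys} = (\<Prod>y\<leftarrow>ys. card {x. P x y})"
proof (induction ys)
  case (Cons y ys)
  have "{xs. list_all2 P xs (y # ys)} = (\<lambda>(x, xs). x # xs) ` ({x. P x y} \<times> {xs. list_all2 P xs ys})"
    by (auto simp: list_all2_Cons2)
  moreover have "inj_on (\<lambda>(x, xs). x # xs) ({x. P x y} \<times> {xs. list_all2 P xs ys})"
    by (auto intro: inj_onI)
  ultimately show ?case
    using Cons.IH by (simp add: card_image card_cartesian_product)
qed simp

definition labeled_rows :: "nat \<Rightarrow> nat \<Rightarrow> nat option list set" where
  "labeled_rows a r = {None # map Some xs |xs.
     length xs + 1 = a \<and> sorted_wrt (<) xs \<and> (\<forall>x\<in>set xs. x < r)}"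

lemma card_labeled_rows:
  assumes "0 < a"
  shows "card (labeled_rows a r) = r choose (a - 1)"
proof -
  have "labeled_rows a r = (\<lambda>xs. None # map Some xs) `
      {xs. length xs = a - 1 \<and> sorted_wrt (<) xs \<and> set xs \<subseteq> {..<r}}"
    using assms by (auto simp: labeled_rows_def)
  moreover have "inj (\<lambda>xs. None # map Some xs :: nat option list)"
    by (auto intro: injI simp: inj_map_eq_map)
  ultimately show ?thesis
    by (simp add: card_image inj_on_subset card_strict_sorted_lists)
qed

lemma Lambda_eq_list_all2: "Lambda \<alpha> r = {T. list_all2 (\<lambda>t a. t \<in> labeled_rows a r) T \<alpha>}"
  by (auto simp: Lambda_def labeled_rows_def list_all2_conv_all_nth)

lemma card_Lambda:
  assumes "0 \<notin> set \<alpha>"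
  shows "card (Lambda \<alpha> r) = (\<Prod>a\<leftarrow>\<alpha>. r choose (a - 1))"
proof -
  have "card (Lambda \<alpha> r) = (\<Prod>a\<leftarrow>\<alpha>. card (labeled_rows a r))"
    by (simp add: Lambda_eq_list_all2 card_list_all2)
  also have "\<dots> = (\<Prod>a\<leftarrow>\<alpha>. r choose (a - 1))"
    using assms by (intro arg_cong[where f = prod_list] map_cong refl card_labeled_rows) (metis gr0I)
  finally show ?thesis .
qed

lemma shape_Lambda: "T \<in> Lambda \<alpha> r \<Longrightarrow> shape T = \<alpha>"
  by (auto simp: Lambda_eq_list_all2 labeled_rows_def shape_def list_all2_conv_all_nth
      intro!: nth_equalityI)

lemma lattice_seqs_eq_image:
  "lattice_seqs m (int h) =
     (\<lambda>ys. 0 # ys @ [int h]) ` {ys. length ys = m \<and> sorted ys \<and> set ys \<subseteq> {0..int h}}"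
proof (intro equalityI subsetI)
  fix L assume L: "L \<in> lattice_seqs m (int h)"
  then have "length L = m + 2" by (simp add: lattice_seqs_def)
  then obtain x ys y where "L = x # ys @ [y]" and "length ys = m"
    by (cases L; cases "tl L" rule: rev_cases) auto
  with L show "L \<in> (\<lambda>ys. 0 # ys @ [int h]) ` {ys. length ys = m \<and> sorted ys \<and> set ys \<subseteq> {0..int h}}"
    by (auto simp: lattice_seqs_def nth_append sorted_append)
qed (auto simp: lattice_seqs_def nth_append sorted_append subset_iff)

lemma card_lattice_seqs: "card (lattice_seqs m (int h)) = (m + h) choose h"
proof -
  have "inj (\<lambda>ys. 0 # ys @ [int h])"
    by (auto intro: injI)
  moreover have "card {0..int h} = h + 1"
    by simp
  ultimately have "card (lattice_seqs m (int h)) = (m + h) choose m"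
    by (simp add: lattice_seqs_eq_image card_image inj_on_subset card_sorted_lists add.commute)
  then show ?thesis
    by (metis binomial_symmetric add_diff_cancel_left' le_add1)
qed

lemma finite_lattice_seqs: "finite (lattice_seqs m (int h))"
  by (rule card_ge_0_finite) (simp add: card_lattice_seqs)

lemma mem_comps_C: "\<alpha> \<in> comps_C K r \<longleftrightarrow> sum_list \<alpha> \<le> K \<and> set \<alpha> \<subseteq> {2..r + 1}"
  by (auto simp: comps_C_def comps_c_def)

lemma length_le_sum_list: "0 \<notin> set (ns :: nat list) \<Longrightarrow> length ns \<le> sum_list ns"
  by (induction ns) (auto simp: Suc_le_eq)

lemma finite_comps_C: "finite (comps_C K r)"
proof (rule finite_subset)
  show "comps_C K r \<subseteq> {\<alpha>. set \<alpha> \<subseteq> {2..r + 1} \<and> length \<alpha> \<le> K}"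
  proof
    fix \<alpha> assume "\<alpha> \<in> comps_C K r"
    then have "sum_list \<alpha> \<le> K" and parts: "set \<alpha> \<subseteq> {2..r + 1}"
      by (simp_all add: mem_comps_C)
    moreover have "length \<alpha> \<le> sum_list \<alpha>"
      using parts by (intro length_le_sum_list) auto
    ultimately show "\<alpha> \<in> {\<alpha>. set \<alpha> \<subseteq> {2..r + 1} \<and> length \<alpha> \<le> K}"
      by simp
  qed
qed (simp add: finite_lists_length_le)

lemma comps_C_eq_insert_Cons:
  "comps_C K r = insert [] (\<Union>a\<in>{a\<in>{2..r + 1}. a \<le> K}. (#) a ` comps_C (K - a) r)"
proof (intro equalityI subsetI)
  fix \<alpha> assume "\<alpha> \<in> comps_C K r"
  then show "\<alpha> \<in> insert [] (\<Union>a\<in>{a\<in>{2..r + 1}. a \<le> K}. (#) a ` comps_C (K - a) r)"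
    by (cases \<alpha>) (auto simp: mem_comps_C)
qed (auto simp: mem_comps_C subset_iff)

definition comp_weight :: "nat \<Rightarrow> nat list \<Rightarrow> int" where
  "comp_weight r \<alpha> = (\<Prod>a\<leftarrow>\<alpha>. (-1) ^ (a - 1) * int (r choose (a - 1)))"

lemma comp_weight_eq_sign_card_Lambda:
  assumes "0 \<notin> set \<alpha>"
  shows "comp_weight r \<alpha> = (-1) ^ (sum_list \<alpha> - length \<alpha>) * int (card (Lambda \<alpha> r))"
proof -
  have "comp_weight r \<alpha> = (-1) ^ (sum_list \<alpha> - length \<alpha>) * int (\<Prod>a\<leftarrow>\<alpha>. r choose (a - 1))"
    using assms
  proof (induction \<alpha>)
    case (Cons a \<alpha>)
    then have "a - 1 + (sum_list \<alpha> - length \<alpha>) = sum_list (a # \<alpha>) - length (a # \<alpha>)"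
      using length_le_sum_list[of \<alpha>] by auto
    then have "(-1) ^ (a - 1) * (-1) ^ (sum_list \<alpha> - length \<alpha>) =
        (-1 :: int) ^ (sum_list (a # \<alpha>) - length (a # \<alpha>))"
      by (simp only: power_add[symmetric])
    with Cons show ?case
      by (simp add: comp_weight_def mult_ac)
  qed (simp add: comp_weight_def)
  with assms show ?thesis
    by (simp add: card_Lambda)
qed

lemma finite_Lambda:
  assumes "set \<alpha> \<subseteq> {1..r + 1}"
  shows "finite (Lambda \<alpha> r)"
proof -
  from assms have "0 \<notin> set \<alpha>"
    by auto
  then have "card (Lambda \<alpha> r) = (\<Prod>a\<leftarrow>\<alpha>. r choose (a - 1))"
    by (rule card_Lambda)
  also have "\<dots> \<noteq> 0"
    using assms by (auto simp: prod_list_zero_iff subset_iff)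
  finally show ?thesis
    by (metis card.infinite)
qed

lemma sum_wt_Lambda_times_lattice_seqs:
  assumes "0 \<notin> set \<alpha>"
  shows "(\<Sum>x\<in>Lambda \<alpha> r \<times> lattice_seqs m (int h). wt x) = comp_weight r \<alpha> * int ((m + h) choose h)"
proof -
  have "(\<Sum>x\<in>Lambda \<alpha> r \<times> lattice_seqs m (int h). wt x) =
      (\<Sum>x\<in>Lambda \<alpha> r \<times> lattice_seqs m (int h). (-1) ^ (sum_list \<alpha> - length \<alpha>))"
    by (rule sum.cong) (auto simp: wt_def sign_def dest: shape_Lambda)
  also have "\<dots> = (-1) ^ (sum_list \<alpha> - length \<alpha>) * int (card (Lambda \<alpha> r)) * int ((m + h) choose h)"
    by (simp add: card_cartesian_product card_lattice_seqs)
  also have "\<dots> = comp_weight r \<alpha> * int ((m + h) choose h)"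
    by (simp only: comp_weight_eq_sign_card_Lambda[OF assms])
  finally show ?thesis .
qed

lemma sum_wt_labeled_lattice_seqs:
  "(\<Sum>x\<in>labeled_lattice_seqs k n r. wt x) =
     (\<Sum>\<alpha>\<in>comps_C k r. comp_weight r \<alpha> *
        int ((r * k + n + 1 + length \<alpha> + (k - sum_list \<alpha>)) choose (k - sum_list \<alpha>)))"
proof -
  define fiber where "fiber \<alpha> = Lambda \<alpha> r \<times>
      lattice_seqs (r * k + n + 1 + length \<alpha>) (int (k - sum_list \<alpha>))" for \<alpha>
  have fiber: "finite (fiber \<alpha>) \<and> (\<Sum>x\<in>fiber \<alpha>. wt x) = comp_weight r \<alpha> *
      int ((r * k + n + 1 + length \<alpha> + (k - sum_list \<alpha>)) choose (k - sum_list \<alpha>))"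
    if "\<alpha> \<in> comps_C k r" for \<alpha>
  proof -
    from that have "set \<alpha> \<subseteq> {1..r + 1}" and "0 \<notin> set \<alpha>"
      by (auto simp: mem_comps_C)
    then show ?thesis
      by (simp add: fiber_def finite_Lambda finite_lattice_seqs sum_wt_Lambda_times_lattice_seqs)
  qed
  have partition: "labeled_lattice_seqs k n r = (\<Union>\<alpha>\<in>comps_C k r. fiber \<alpha>)"
    by (auto simp: labeled_lattice_seqs_def fiber_def mem_comps_C of_nat_diff)
  have "(\<Sum>x\<in>labeled_lattice_seqs k n r. wt x) = (\<Sum>\<alpha>\<in>comps_C k r. \<Sum>x\<in>fiber \<alpha>. wt x)"
    unfolding partition
    by (rule sum.UNION_disjoint) (use fiber finite_comps_C in \<open>auto simp: fiber_def dest: shape_Lambda\<close>)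
  also have "\<dots> = (\<Sum>\<alpha>\<in>comps_C k r. comp_weight r \<alpha> *
        int ((r * k + n + 1 + length \<alpha> + (k - sum_list \<alpha>)) choose (k - sum_list \<alpha>)))"
    using fiber by (intro sum.cong refl) blast
  finally show ?thesis .
qed

section \<open>Generating functions\<close>

definition geometric_fps :: "'a::comm_ring_1 fps" where
  "geometric_fps = Abs_fps (\<lambda>_. 1)"

lemma geometric_fps_nth [simp]: "geometric_fps $ n = 1"
  by (simp add: geometric_fps_def)

lemma geometric_fps_eq: "geometric_fps = 1 + fps_X * geometric_fps"
  by (rule fps_ext) (simp add: geometric_fps_def)

lemma one_minus_fps_X_mult_geometric_fps: "(1 - fps_X) * geometric_fps = 1"
proof -
  have "(1 - fps_X) * geometric_fps = geometric_fps - fps_X * geometric_fps"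
    by (simp add: algebra_simps)
  then show ?thesis
    by (metis geometric_fps_eq add_diff_cancel_right')
qed

lemma one_minus_fps_X_power_mult_geometric_fps_power:
  assumes "r \<le> q"
  shows "(1 - fps_X) ^ r * geometric_fps ^ q = geometric_fps ^ (q - r)"
proof -
  have "(1 - fps_X) ^ r * geometric_fps ^ q =
      ((1 - fps_X) * geometric_fps) ^ r * geometric_fps ^ (q - r)"
    unfolding power_mult_distrib using assms
    by (simp only: mult.assoc flip: power_add) simp
  then show ?thesis
    by (simp add: one_minus_fps_X_mult_geometric_fps)
qed

lemma geometric_fps_power_nth:
  "(geometric_fps ^ Suc p :: 'a::comm_ring_1 fps) $ t = of_nat ((p + t) choose t)"
proof (induction p arbitrary: t)
  case 0
  show ?case
    by simp
next
  case (Suc p)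
  have "(geometric_fps ^ Suc (Suc p) :: 'a fps) $ t = (geometric_fps ^ Suc p * geometric_fps) $ t"
    by (simp only: power_Suc2)
  also have "\<dots> = (\<Sum>i=0..t. of_nat ((p + i) choose i))"
    unfolding fps_mult_nth geometric_fps_nth mult_1_right by (rule sum.cong) (simp_all only: Suc.IH)
  also have "\<dots> = of_nat ((Suc p + t) choose t)"
    by (simp flip: of_nat_sum add: sum_choose_lower atLeast0AtMost)
  finally show ?case .
qed

lemma one_minus_fps_X_power_eq:
  "(1 - fps_X) ^ r =
     (\<Sum>b\<le>r. fps_const ((-1) ^ b * of_nat (r choose b)) * fps_X ^ b :: 'a::comm_ring_1 fps)"
proof -
  have "(1 - fps_X :: 'a fps) ^ r = (- fps_X + 1) ^ r"
    by simp
  also have "\<dots> = (\<Sum>b\<le>r. of_nat (r choose b) * (- fps_X) ^ b * 1 ^ (r - b))"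
    by (rule binomial_ring)
  also have "\<dots> = (\<Sum>b\<le>r. fps_const ((-1) ^ b * of_nat (r choose b)) * fps_X ^ b)"
  proof (rule sum.cong[OF refl])
    fix b
    have "(-1 :: 'a fps) ^ b = fps_const ((-1) ^ b)"
      by (metis fps_const_neg fps_const_1_eq_1 fps_const_power)
    then have "(- fps_X :: 'a fps) ^ b = fps_const ((-1) ^ b) * fps_X ^ b"
      by (simp only: power_minus[of fps_X])
    moreover have "(of_nat (r choose b) :: 'a fps) = fps_const (of_nat (r choose b))"
      by (simp add: fps_of_nat)
    ultimately show "of_nat (r choose b) * (- fps_X) ^ b * 1 ^ (r - b) =
        fps_const ((-1) ^ b * of_nat (r choose b)) * (fps_X ^ b :: 'a fps)"
      by (simp only: power_one mult_1_right mult_1_left fps_const_mult[symmetric] mult_ac)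
  qed
  finally show ?thesis .
qed

lemma fps_nth_eq_if_fps_X_power_dvd_diff:
  fixes f g :: "'a::comm_ring_1 fps"
  assumes "fps_X ^ N dvd f - g" and "j < N"
  shows "f $ j = g $ j"
proof -
  from assms(1) obtain h where "f - g = fps_X ^ N * h"
    by (elim dvdE)
  then have "(f - g) $ j = 0"
    using assms(2) by (simp add: fps_X_power_mult_nth)
  then show ?thesis
    by simp
qed

definition comp_fps :: "nat \<Rightarrow> nat list \<Rightarrow> int fps" where
  "comp_fps r \<alpha> = fps_const (comp_weight r \<alpha>) * fps_X ^ sum_list \<alpha> * geometric_fps ^ length \<alpha>"

lemma comp_fps_Cons: "comp_fps r (a # \<alpha>) = comp_fps r [a] * comp_fps r \<alpha>"
  by (simp add: comp_fps_def comp_weight_def power_add mult_ac)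

lemma fps_X_power_sum_list_dvd_comp_fps: "fps_X ^ sum_list \<alpha> dvd comp_fps r \<alpha>"
  unfolding comp_fps_def by (rule dvd_mult2, rule dvd_mult, rule dvd_refl)

definition comps_fps :: "nat \<Rightarrow> nat \<Rightarrow> int fps" where
  "comps_fps r K = (\<Sum>\<alpha>\<in>comps_C K r. comp_fps r \<alpha>)"

lemma comps_fps_eq:
  "comps_fps r K = 1 + (\<Sum>a\<in>{a\<in>{2..r + 1}. a \<le> K}. comp_fps r [a] * comps_fps r (K - a))"
proof -
  let ?A = "{a\<in>{2..r + 1}. a \<le> K}"
  have fin: "finite (\<Union>a\<in>?A. (#) a ` comps_C (K - a) r)"
    by (simp add: finite_comps_C)
  have "[] \<notin> (\<Union>a\<in>?A. (#) a ` comps_C (K - a) r)"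
    by auto
  with fin have "comps_fps r K = comp_fps r [] + (\<Sum>\<alpha>\<in>(\<Union>a\<in>?A. (#) a ` comps_C (K - a) r). comp_fps r \<alpha>)"
    unfolding comps_fps_def comps_C_eq_insert_Cons[of K r] by (rule sum.insert)
  also have "(\<Sum>\<alpha>\<in>(\<Union>a\<in>?A. (#) a ` comps_C (K - a) r). comp_fps r \<alpha>) =
      (\<Sum>a\<in>?A. \<Sum>\<alpha>\<in>(#) a ` comps_C (K - a) r. comp_fps r \<alpha>)"
    by (rule sum.UNION_disjoint) (auto simp: finite_comps_C)
  also have "\<dots> = (\<Sum>a\<in>?A. comp_fps r [a] * comps_fps r (K - a))"
  proof (rule sum.cong[OF refl])
    fix a
    have "(\<Sum>\<alpha>\<in>(#) a ` comps_C (K - a) r. comp_fps r \<alpha>) = (\<Sum>\<beta>\<in>comps_C (K - a) r. comp_fps r (a # \<beta>))"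
      by (rule sum.reindex[unfolded comp_def]) (simp add: inj_on_def)
    also have "\<dots> = (\<Sum>\<beta>\<in>comps_C (K - a) r. comp_fps r [a] * comp_fps r \<beta>)"
      by (intro sum.cong refl comp_fps_Cons)
    finally show "(\<Sum>\<alpha>\<in>(#) a ` comps_C (K - a) r. comp_fps r \<alpha>) = comp_fps r [a] * comps_fps r (K - a)"
      by (simp only: comps_fps_def sum_distrib_left)
  qed
  finally show ?thesis
    by (simp add: comp_fps_def comp_weight_def)
qed

lemma comps_fps_diff_dvd:
  assumes "K \<le> K'"
  shows "fps_X ^ Suc K dvd comps_fps r K' - comps_fps r K"
proof -
  have sub: "comps_C K r \<subseteq> comps_C K' r"
    using assms by (auto simp: mem_comps_C)
  then have "comps_fps r K' - comps_fps r K = (\<Sum>\<alpha>\<in>comps_C K' r - comps_C K r. comp_fps r \<alpha>)"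
    by (simp add: comps_fps_def sum.subset_diff[OF sub finite_comps_C])
  also have "fps_X ^ Suc K dvd \<dots>"
  proof (rule dvd_sum)
    fix \<alpha> assume "\<alpha> \<in> comps_C K' r - comps_C K r"
    then have "\<not> sum_list \<alpha> \<le> K"
      by (simp add: mem_comps_C) blast
    then show "fps_X ^ Suc K dvd comp_fps r \<alpha>"
      using le_imp_power_dvd[of "Suc K" "sum_list \<alpha>"] fps_X_power_sum_list_dvd_comp_fps dvd_trans
      by (metis not_less_eq_eq)
  qed
  finally show ?thesis .
qed

definition parts_fps :: "nat \<Rightarrow> int fps" where
  "parts_fps r = (\<Sum>a=2..r + 1. comp_fps r [a])"

lemma parts_fps_eq: "parts_fps r = fps_X * ((1 - fps_X) ^ r - 1) * geometric_fps"
proof -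
  let ?c = "\<lambda>b. fps_const ((-1) ^ b * int (r choose b)) :: int fps"
  have "fps_X * ((1 - fps_X) ^ r - 1) = (\<Sum>b=0..r. ?c b * fps_X ^ Suc b) - fps_X"
    unfolding one_minus_fps_X_power_eq atLeast0AtMost right_diff_distrib sum_distrib_left
    by (simp only: power_Suc mult_1_right mult_ac)
  also have "\<dots> = (\<Sum>b=1..r. ?c b * fps_X ^ Suc b)"
    by (simp add: sum.atLeast_Suc_atMost)
  also have "\<dots> = (\<Sum>a=2..r + 1. ?c (a - 1) * fps_X ^ a)"
    using sum.shift_bounds_cl_Suc_ivl[of "\<lambda>a. ?c (a - 1) * fps_X ^ a" 1 r]
    by (simp add: numeral_2_eq_2)
  finally have "fps_X * ((1 - fps_X) ^ r - 1) = (\<Sum>a=2..r + 1. ?c (a - 1) * fps_X ^ a)" .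
  moreover have "parts_fps r = (\<Sum>a=2..r + 1. ?c (a - 1) * fps_X ^ a) * geometric_fps"
    unfolding parts_fps_def sum_distrib_right
    by (intro sum.cong refl) (simp add: comp_fps_def comp_weight_def)
  ultimately show ?thesis
    by simp
qed

lemma one_minus_parts_fps: "1 - parts_fps r = (1 - fps_X * (1 - fps_X) ^ r) * geometric_fps"
proof -
  have "1 - parts_fps r = (1 + fps_X * geometric_fps) - fps_X * (1 - fps_X) ^ r * geometric_fps"
    unfolding parts_fps_eq
    by (simp only: right_diff_distrib left_diff_distrib mult_1_right diff_diff_eq2 diff_add_eq
        add.commute)
  also have "\<dots> = geometric_fps - fps_X * (1 - fps_X) ^ r * geometric_fps"
    by (simp only: geometric_fps_eq[symmetric])
  also have "\<dots> = (1 - fps_X * (1 - fps_X) ^ r) * geometric_fps"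
    by (simp only: left_diff_distrib mult_1_left)
  finally show ?thesis .
qed

lemma comps_fps_mult_one_minus_parts_fps:
  "comps_fps r K * (1 - parts_fps r) - 1 =
     (\<Sum>a=2..r + 1. comp_fps r [a] * ((if a \<le> K then comps_fps r (K - a) else 0) - comps_fps r K))"
proof -
  define S where "S = {2..r + 1}"
  have "comps_fps r K - 1 = (\<Sum>a\<in>{a\<in>S. a \<le> K}. comp_fps r [a] * comps_fps r (K - a))"
    unfolding S_def by (subst comps_fps_eq) simp
  also have "\<dots> = (\<Sum>a\<in>S. if a \<le> K then comp_fps r [a] * comps_fps r (K - a) else 0)"
    by (rule sum.inter_filter) (simp add: S_def)
  also have "\<dots> = (\<Sum>a\<in>S. comp_fps r [a] * (if a \<le> K then comps_fps r (K - a) else 0))"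
    by (rule sum.cong) simp_all
  finally have comps_fps_minus_one: "comps_fps r K - 1 = \<dots>" .
  have "parts_fps r * comps_fps r K = (\<Sum>a\<in>S. comp_fps r [a] * comps_fps r K)"
    unfolding parts_fps_def S_def by (rule sum_distrib_right)
  moreover have "comps_fps r K * (1 - parts_fps r) - 1 =
      (comps_fps r K - 1) - parts_fps r * comps_fps r K"
    by (simp add: algebra_simps)
  ultimately show ?thesis
    unfolding S_def[symmetric]
    by (simp add: comps_fps_minus_one right_diff_distrib sum_subtractf)
qed

lemma comps_fps_mult_one_minus_parts_fps_dvd:
  "fps_X ^ Suc K dvd comps_fps r K * (1 - parts_fps r) - 1"
  unfolding comps_fps_mult_one_minus_parts_fps
proof (rule dvd_sum)
  fix a
  let ?tail = "(if a \<le> K then comps_fps r (K - a) else 0) - comps_fps r K"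
  have part_dvd: "fps_X ^ a dvd comp_fps r [a]"
    using fps_X_power_sum_list_dvd_comp_fps[of "[a]" r] by simp
  show "fps_X ^ Suc K dvd comp_fps r [a] * ?tail"
  proof (cases "a \<le> K")
    case True
    have "fps_X ^ Suc (K - a) dvd comps_fps r K - comps_fps r (K - a)"
      by (rule comps_fps_diff_dvd) simp
    then have "fps_X ^ Suc (K - a) dvd - (comps_fps r K - comps_fps r (K - a))"
      by (simp only: dvd_minus_iff)
    then have "fps_X ^ Suc (K - a) dvd ?tail"
      using True by simp
    with part_dvd have "fps_X ^ a * fps_X ^ Suc (K - a) dvd comp_fps r [a] * ?tail"
      by (rule mult_dvd_mono)
    moreover have "a + Suc (K - a) = Suc K"
      using True by simp
    ultimately show ?thesis
      by (metis power_add)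
  next
    case False
    then have "fps_X ^ Suc K dvd fps_X ^ a"
      by (intro le_imp_power_dvd) simp
    then show ?thesis
      using dvd_trans part_dvd dvd_mult2 by metis
  qed
qed

lemma geometric_fps_power_mult_comps_fps_dvd:
  "fps_X ^ Suc K dvd geometric_fps ^ Suc M * comps_fps r K -
     geometric_fps ^ M * (\<Sum>i\<le>K. (fps_X * (1 - fps_X) ^ r) ^ i)"
proof -
  let ?A = "geometric_fps :: int fps" and ?y = "fps_X * (1 - fps_X) ^ r :: int fps"
  let ?Q = "\<Sum>i\<le>K. ?y ^ i" and ?C = "comps_fps r K" and ?P = "parts_fps r"
  have A_power_Suc: "?A ^ Suc M * (1 - ?y) = ?A ^ M * (1 - ?P)"
    by (simp add: one_minus_parts_fps mult_ac)
  have "?A ^ M * ?Q * (?C * (1 - ?P) - 1) = ?Q * ?C * (?A ^ M * (1 - ?P)) - ?A ^ M * ?Q"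
    by (simp add: algebra_simps)
  also have "\<dots> = ?A ^ Suc M * ?C * ((1 - ?y) * ?Q) - ?A ^ M * ?Q"
    unfolding A_power_Suc[symmetric] by (simp only: mult_ac)
  also have "\<dots> = ?A ^ Suc M * ?C * (1 - ?y ^ Suc K) - ?A ^ M * ?Q"
    by (simp only: sum_gp_basic)
  finally have "?A ^ Suc M * ?C - ?A ^ M * ?Q =
      ?A ^ Suc M * ?C * ?y ^ Suc K + ?A ^ M * ?Q * (?C * (1 - ?P) - 1)"
    by (simp add: algebra_simps)
  moreover have "fps_X ^ Suc K dvd ?y ^ Suc K"
    unfolding power_mult_distrib by (rule dvd_triv_left)
  moreover have "fps_X ^ Suc K dvd ?C * (1 - ?P) - 1"
    by (rule comps_fps_mult_one_minus_parts_fps_dvd)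
  ultimately show ?thesis
    by (metis dvd_add dvd_mult)
qed

lemma geometric_fps_power_mult_comps_fps_nth:
  "(geometric_fps ^ Suc M * comps_fps r K) $ K =
     (\<Sum>\<alpha>\<in>comps_C K r. comp_weight r \<alpha> *
        int ((M + length \<alpha> + (K - sum_list \<alpha>)) choose (K - sum_list \<alpha>)))"
proof -
  have "(geometric_fps ^ Suc M * comps_fps r K) $ K =
      (\<Sum>\<alpha>\<in>comps_C K r. (geometric_fps ^ Suc M * comp_fps r \<alpha>) $ K)"
    by (simp only: comps_fps_def sum_distrib_left fps_sum_nth)
  also have "\<dots> = (\<Sum>\<alpha>\<in>comps_C K r. comp_weight r \<alpha> *
        int ((M + length \<alpha> + (K - sum_list \<alpha>)) choose (K - sum_list \<alpha>)))"
  proof (rule sum.cong[OF refl])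
    fix \<alpha> assume "\<alpha> \<in> comps_C K r"
    then have "sum_list \<alpha> \<le> K"
      by (simp add: mem_comps_C)
    have "geometric_fps ^ Suc M * comp_fps r \<alpha> = fps_const (comp_weight r \<alpha>) *
        (fps_X ^ sum_list \<alpha> * geometric_fps ^ Suc (M + length \<alpha>))"
      by (simp add: comp_fps_def power_add mult_ac)
    then show "(geometric_fps ^ Suc M * comp_fps r \<alpha>) $ K = comp_weight r \<alpha> *
        int ((M + length \<alpha> + (K - sum_list \<alpha>)) choose (K - sum_list \<alpha>))"
      using \<open>sum_list \<alpha> \<le> K\<close>
      by (simp only: fps_mult_left_const_nth fps_X_power_mult_nth geometric_fps_power_nth) simp
  qed
  finally show ?thesis .
qed

lemma geometric_fps_power_mult_sum_nth:
  "(geometric_fps ^ (r * K + n + 1) * (\<Sum>i\<le>K. (fps_X * (1 - fps_X) ^ r) ^ i)) $ K =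
     (\<Sum>i=0..K. int (((r + 1) * i + n) choose i))"
proof -
  have "(geometric_fps ^ (r * K + n + 1) * (\<Sum>i\<le>K. (fps_X * (1 - fps_X) ^ r) ^ i)) $ K =
      (\<Sum>i\<le>K. (fps_X ^ i * (((1 - fps_X) ^ r) ^ i * geometric_fps ^ (r * K + n + 1))) $ K)"
    by (simp only: sum_distrib_left fps_sum_nth power_mult_distrib mult_ac)
  also have "\<dots> = (\<Sum>i\<le>K. int (((r + 1) * (K - i) + n) choose (K - i)))"
  proof (rule sum.cong[OF refl])
    fix i assume "i \<in> {..K}"
    then have "i \<le> K"
      by simp
    have exponent: "r * (K - i) + n + (K - i) = (r + 1) * (K - i) + n"
      by simp
    from \<open>i \<le> K\<close> have "r * i \<le> r * K"
      by (rule mult_le_mono2)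
    moreover have "r * (K - i) = r * K - r * i"
      by (rule diff_mult_distrib2)
    ultimately have "r * i \<le> r * K + n + 1" and "r * K + n + 1 - r * i = Suc (r * (K - i) + n)"
      by linarith+
    then have "((1 - fps_X) ^ r) ^ i * geometric_fps ^ (r * K + n + 1) =
        (geometric_fps ^ Suc (r * (K - i) + n) :: int fps)"
      by (simp only: one_minus_fps_X_power_mult_geometric_fps_power flip: power_mult)
    then have "(fps_X ^ i * (((1 - fps_X) ^ r) ^ i * geometric_fps ^ (r * K + n + 1))) $ K =
        (geometric_fps ^ Suc (r * (K - i) + n) :: int fps) $ (K - i)"
      using \<open>i \<le> K\<close> by (simp only: fps_X_power_mult_nth) simp
    also have "\<dots> = int (((r + 1) * (K - i) + n) choose (K - i))"
      using exponent by (simp only: geometric_fps_power_nth)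
    finally show "(fps_X ^ i * (((1 - fps_X) ^ r) ^ i * geometric_fps ^ (r * K + n + 1))) $ K =
        int (((r + 1) * (K - i) + n) choose (K - i))" .
  qed
  also have "\<dots> = (\<Sum>i=0..K. int (((r + 1) * i + n) choose i))"
    using sum.atLeastAtMost_rev[of "\<lambda>i. int (((r + 1) * i + n) choose i)" 0 K]
    by (simp add: atLeast0AtMost)
  finally show ?thesis .
qed

theorem theorem3p1:
  fixes k n r :: nat
  shows "(\<Sum>x\<in>labeled_lattice_seqs k n r. wt x) = (\<Sum>i=0..k. int (((r + 1) * i + n) choose i))"
proof -
  let ?M = "r * k + n + 1"
  have "(\<Sum>x\<in>labeled_lattice_seqs k n r. wt x) = (geometric_fps ^ Suc ?M * comps_fps r k) $ k"
    by (simp only: sum_wt_labeled_lattice_seqs geometric_fps_power_mult_comps_fps_nth)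
  also have "\<dots> = (geometric_fps ^ ?M * (\<Sum>i\<le>k. (fps_X * (1 - fps_X) ^ r) ^ i)) $ k"
    by (rule fps_nth_eq_if_fps_X_power_dvd_diff[OF geometric_fps_power_mult_comps_fps_dvd]) simp
  also have "\<dots> = (\<Sum>i=0..k. int (((r + 1) * i + n) choose i))"
    by (rule geometric_fps_power_mult_sum_nth)
  finally show ?thesis .
qed

end
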